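(* Let $\mathbf c:[-l/2,l/2]\to\mathbb R^3$ ($l>0$) be an embedded arc parametrized by arc-length with nowhere vanishing curvature, and let $C$ be its image. Then $C$ admits a positive symmetry and a negative symmetry at the same time if and only if $C$ lies in a plane and $C$ has a non-trivial symmetry.
   Context: A symmetry of $C$ is an isometry $T\ne\mathrm{id}$ of $\mathbb R^3$ with $T(C)=C$; it is non-trivial if $T(\mathbf x)\ne\mathbf x$ for some $\mathbf x\in C$, and positive (resp. negative) if $T$ preserves (resp. reverses) the orientation of $\mathbb R^3$. *)

theory Defs
  imports "HOL-Analysis.Analysis"
begin

definition isometry3 :: "(real^3 \<Rightarrow> real^3) \<Rightarrow> bool" where
  "isometry3 T \<longleftrightarrow> (\<forall>x y. dist (T x) (T y) = dist x y)"

definition linear_part :: "(real^3 \<Rightarrow> real^3) \<Rightarrow> real^3 \<Rightarrow> real^3" where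
  "linear_part T = (\<lambda>x. T x - T 0)"

definition orientation_preserving :: "(real^3 \<Rightarrow> real^3) \<Rightarrow> bool" where
  "orientation_preserving T \<longleftrightarrow> det (matrix (linear_part T)) > 0"

definition orientation_reversing :: "(real^3 \<Rightarrow> real^3) \<Rightarrow> bool" where
  "orientation_reversing T \<longleftrightarrow> det (matrix (linear_part T)) < 0"

definition symmetry_of :: "(real^3) set \<Rightarrow> (real^3 \<Rightarrow> real^3) \<Rightarrow> bool" where
  "symmetry_of C T \<longleftrightarrow> isometry3 T \<and> T \<noteq> id \<and> T ` C = C"

definition nontrivial_symmetry_of :: "(real^3) set \<Rightarrow> (real^3 \<Rightarrow> real^3) \<Rightarrow> bool" where
  "nontrivial_symmetry_of C T \<longleftrightarrow> symmetry_of C T \<and> (\<exists>x\<in>C. T x \<noteq> x)"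

definition positive_symmetry_of :: "(real^3) set \<Rightarrow> (real^3 \<Rightarrow> real^3) \<Rightarrow> bool" where
  "positive_symmetry_of C T \<longleftrightarrow> symmetry_of C T \<and> orientation_preserving T"

definition negative_symmetry_of :: "(real^3) set \<Rightarrow> (real^3 \<Rightarrow> real^3) \<Rightarrow> bool" where
  "negative_symmetry_of C T \<longleftrightarrow> symmetry_of C T \<and> orientation_reversing T"

definition lies_in_plane :: "(real^3) set \<Rightarrow> bool" where
  "lies_in_plane C \<longleftrightarrow> (\<exists>n d. n \<noteq> 0 \<and> (\<forall>x\<in>C. n \<bullet> x = d))"

text \<open>Embedded arc of class C^2 on [-l/2,l/2], parametrized by arc length, with nowhere
  vanishing curvature (for arc-length parametrization the curvature is the norm of c'').\<close>
definition arclength_arc_nonzero_curvature :: "real \<Rightarrow> (real \<Rightarrow> real^3) \<Rightarrow> bool" where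
  "arclength_arc_nonzero_curvature l c \<longleftrightarrow>
     (let I = {-l/2..l/2} in
      inj_on c I \<and>
      (\<exists>c' c''.
         (\<forall>t\<in>I. (c has_vector_derivative c' t) (at t within I)) \<and>
         (\<forall>t\<in>I. (c' has_vector_derivative c'' t) (at t within I)) \<and>
         continuous_on I c'' \<and>
         (\<forall>t\<in>I. norm (c' t) = 1) \<and>
         (\<forall>t\<in>I. norm (c'' t) \<noteq> 0)))"

end

theory Submission
  imports Defs
begin

(* Every symmetry U of the arc C induces a homeomorphism h of the parameter interval with
   c \<circ> h = U \<circ> c. Since c has unit speed and U preserves chord lengths, h has derivative
   1 where it is increasing, so either h = id and U fixes C pointwise, or h reverses the
   interval and U swaps the two end points. An isometry other than the identity fixing C
   pointwise forces C into a plane, and into a line if it preserves orientation; a line is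
   excluded by the nonvanishing curvature. Hence a positive symmetry T must swap the ends,
   and if a negative symmetry S swaps them too, then T \<circ> S fixes C pointwise and is an
   orientation reversing isometry, so C is planar. Conversely, the reflection in the plane of
   C is a negative symmetry, and composing it with a negative nontrivial symmetry yields a
   positive one. *)

lemma orthogonal_transformation_linear_part:
  assumes "isometry3 U"
  shows "orthogonal_transformation (linear_part U)"
  using assms unfolding orthogonal_transformation_isometry isometry3_def linear_part_def
  by (simp add: dist_norm)

lemma linear_part_diff:
  assumes "isometry3 U"
  shows "linear_part U (x - y) = U x - U y"
proof -
  have "linear (linear_part U)"
    using orthogonal_transformation_linear_part[OF assms] by (rule orthogonal_transformation_linear)
  then have "linear_part U (x - y) = linear_part U x - linear_part U y"
    by (rule linear_diff)
  then show ?thesis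
    by (simp add: linear_part_def)
qed

lemma isometry3_comp: "isometry3 T \<Longrightarrow> isometry3 S \<Longrightarrow> isometry3 (T \<circ> S)"
  by (simp add: isometry3_def)

lemma isometry3_continuous_on: "isometry3 U \<Longrightarrow> continuous_on A U"
  unfolding isometry3_def by (metis continuous_on_iff)

lemma isometry3_inj: "isometry3 U \<Longrightarrow> inj U"
  unfolding isometry3_def by (metis dist_eq_0_iff injI)

lemma linear_part_comp:
  assumes "isometry3 T"
  shows "linear_part (T \<circ> S) = linear_part T \<circ> linear_part S"
  using linear_part_diff[OF assms] by (auto simp: linear_part_def)

lemma det_linear_part_comp:
  assumes "isometry3 T" "isometry3 S"
  shows "det (matrix (linear_part (T \<circ> S))) = det (matrix (linear_part T)) * det (matrix (linear_part S))"
  using assms by (simp add: linear_part_comp matrix_compose det_mul orthogonal_transformation_linear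
      orthogonal_transformation_linear_part)

lemma det_linear_part_id: "det (matrix (linear_part id)) = 1"
proof -
  have "linear_part id = id"
    by (auto simp: linear_part_def)
  then show ?thesis
    by (simp add: matrix_id_mat_1 det_I)
qed

lemma det_linear_part_cases:
  assumes "isometry3 U"
  shows "det (matrix (linear_part U)) = 1 \<or> det (matrix (linear_part U)) = -1"
  using orthogonal_transformation_det[OF orthogonal_transformation_linear_part[OF assms]] by arith

lemma eq_id_if_linear_part_id:
  assumes "linear_part U = id" and "U p = p"
  shows "U = id"
proof -
  have shift: "U x = U 0 + x" for x
    using fun_cong[OF assms(1), of x] by (simp add: linear_part_def algebra_simps)
  then have "U 0 = 0"
    using shift[of p] assms(2) by (metis add_cancel_left_left)
  then show ?thesis
    by (metis shift add_0 eq_id_iff)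
qed

lemma orthogonal_transformation_displacement_orthogonal_to_fixed:
  assumes "orthogonal_transformation L" and "L a = a"
  shows "(L v - v) \<bullet> a = 0"
  using assms by (metis inner_diff_left orthogonal_transformation_def diff_self)

lemma pointwise_fixed_set_lies_in_plane:
  assumes "isometry3 U" "U \<noteq> id" and fixed: "\<forall>x\<in>C. U x = x"
  shows "lies_in_plane C"
proof (cases "C = {}")
  case True
  then show ?thesis
    unfolding lies_in_plane_def by (auto intro!: exI[of _ "axis 1 1"])
next
  case False
  then obtain p where p: "p \<in> C" by blast
  have "linear_part U \<noteq> id"
    using eq_id_if_linear_part_id assms(2) fixed p by blast
  then obtain v where v: "linear_part U v - v \<noteq> 0" by (auto simp: fun_eq_iff)
  have "(linear_part U v - v) \<bullet> x = (linear_part U v - v) \<bullet> p" if "x \<in> C" for x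
  proof -
    have "linear_part U (x - p) = x - p"
      using linear_part_diff[OF assms(1)] fixed that p by simp
    then have "(linear_part U v - v) \<bullet> (x - p) = 0"
      by (rule orthogonal_transformation_displacement_orthogonal_to_fixed[OF
            orthogonal_transformation_linear_part[OF assms(1)]])
    then show ?thesis
      by (simp add: inner_diff_right)
  qed
  then show ?thesis
    unfolding lies_in_plane_def using v by blast
qed

lemma orientation_preserving_pointwise_fixed_set_collinear:
  assumes iso: "isometry3 U" and "U \<noteq> id" "orientation_preserving U"
    and fixed: "\<forall>x\<in>C. U x = x"
  shows "collinear C"
proof (rule ccontr)
  assume noncollinear: "\<not> collinear C"
  let ?L = "linear_part U"
  have orth: "orthogonal_transformation ?L"
    using iso by (rule orthogonal_transformation_linear_part)
  have fixed_diff: "?L (x - y) = x - y" if "x \<in> C" "y \<in> C" for x y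
    using linear_part_diff[OF iso] fixed that by simp
  obtain x y where xy: "x \<in> C" "y \<in> C" "x \<noteq> y"
    using noncollinear unfolding collinear_def by (metis scaleR_zero_right right_minus_eq)
  define u where "u = x - y"
  obtain x' y' where x'y': "x' \<in> C" "y' \<in> C" "\<And>k. x' - y' \<noteq> k *\<^sub>R u"
    using noncollinear unfolding collinear_def by blast
  define w where "w = x' - y'"
  have "u \<noteq> 0" "w \<noteq> 0" "\<And>k. w \<noteq> k *\<^sub>R u"
    using xy x'y'(3)[of 0] x'y'(3) by (auto simp: u_def w_def)
  then have uw: "cross3 u w \<noteq> 0"
    by (simp add: cross_eq_0 collinear_lemma)
  have "det (matrix ?L) = 1"
    using det_linear_part_cases[OF iso] \<open>orientation_preserving U\<close>
    by (auto simp: orientation_preserving_def)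
  then have "?L (cross3 u w) = cross3 u w"
    using cross_orthogonal_transformation[OF orth, of u w] fixed_diff xy x'y'
    by (simp add: u_def w_def)
  moreover have "?L u = u" "?L w = w"
    using fixed_diff xy x'y' by (simp_all add: u_def w_def)
  \<comment> \<open>L v - v is orthogonal to the fixed vectors u, w and u \<times> w, so it vanishes.\<close>
  ultimately have "?L v - v = 0" for v
    using orthogonal_transformation_displacement_orthogonal_to_fixed[OF orth] uw
      norm_and_cross_eq_0[of "?L v - v" "cross3 u w"] Lagrange[of "?L v - v" u w]
    by auto
  then have "U = id"
    using eq_id_if_linear_part_id fixed xy(1) by (metis eq_id_iff right_minus_eq)
  with \<open>U \<noteq> id\<close> show False ..
qed

definition plane_reflection :: "real^3 \<Rightarrow> real \<Rightarrow> real^3 \<Rightarrow> real^3" where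
  "plane_reflection n d x = x - (2 * (n \<bullet> x - d) / (n \<bullet> n)) *\<^sub>R n"

lemma plane_reflection_fixes_plane: "n \<bullet> x = d \<Longrightarrow> plane_reflection n d x = x"
  by (simp add: plane_reflection_def)

lemma plane_reflection_diff:
  "plane_reflection n d x - plane_reflection n d y = plane_reflection n 0 (x - y)"
  by (simp add: plane_reflection_def inner_diff_right diff_divide_distrib scaleR_diff_left algebra_simps)

lemma linear_part_plane_reflection: "linear_part (plane_reflection n d) = plane_reflection n 0"
  by (auto simp: linear_part_def plane_reflection_diff)

lemma norm_plane_reflection:
  assumes "n \<noteq> 0"
  shows "norm (plane_reflection n 0 x) = norm x"
proof -
  have "plane_reflection n 0 x \<bullet> plane_reflection n 0 x = x \<bullet> x"
    using assms by (simp add: plane_reflection_def inner_diff_left inner_diff_right inner_commute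
        field_simps power2_eq_square)
  then show ?thesis
    by (simp add: norm_eq_sqrt_inner)
qed

lemma isometry3_plane_reflection: "n \<noteq> 0 \<Longrightarrow> isometry3 (plane_reflection n d)"
  by (simp add: isometry3_def dist_norm plane_reflection_diff norm_plane_reflection)

lemma det_plane_reflection:
  assumes "n \<noteq> 0"
  shows "det (matrix (plane_reflection n 0)) = -1"
proof -
  define N where "N = n$1 * n$1 + n$2 * n$2 + n$3 * n$3"
  have nn: "n \<bullet> n = N"
    by (simp add: N_def inner_vec_def sum_3)
  have "N \<noteq> 0"
    using assms by (simp flip: nn)
  define M :: "real^3^3" where "M = (\<chi> i j. (if i = j then 1 else 0) - 2 * (n$i * n$j) / N)"
  have "matrix (plane_reflection n 0) = M"
    by (simp add: M_def matrix_def plane_reflection_def vec_eq_iff nn inner_axis mult.commute)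
      (auto simp: axis_def)
  moreover have "det M * N^3 = -1 * N^3"
    unfolding M_def det_3 using \<open>N \<noteq> 0\<close> by (simp add: field_simps) (simp add: N_def; algebra)
  then have "det M = -1"
    using \<open>N \<noteq> 0\<close> by (subst (asm) mult_right_cancel) simp_all
  ultimately show ?thesis
    by simp
qed

lemma has_vector_derivative_difference_quotient:
  fixes f :: "real \<Rightarrow> 'a::real_normed_vector"
  assumes "(f has_vector_derivative f') (at t within S)"
  shows "((\<lambda>s. (1 / (s - t)) *\<^sub>R (f s - f t)) \<longlongrightarrow> f') (at t within S)"
proof -
  have "((\<lambda>s. norm ((f s - f t) - (s - t) *\<^sub>R f') / norm (s - t)) \<longlongrightarrow> 0) (at t within S)"
    using assms by (simp add: has_vector_derivative_def has_derivative_iff_norm)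
  moreover have "norm ((f s - f t) - (s - t) *\<^sub>R f') / norm (s - t)
      = norm ((1 / (s - t)) *\<^sub>R (f s - f t) - f')" if "s \<noteq> t" for s
  proof -
    have "(1 / (s - t)) *\<^sub>R (f s - f t) - f' = (1 / (s - t)) *\<^sub>R ((f s - f t) - (s - t) *\<^sub>R f')"
      using that by (simp add: scaleR_diff_right)
    then show ?thesis
      by (simp add: divide_simps)
  qed
  then have "eventually (\<lambda>s. norm ((f s - f t) - (s - t) *\<^sub>R f') / norm (s - t)
      = norm ((1 / (s - t)) *\<^sub>R (f s - f t) - f')) (at t within S)"
    by (auto simp: eventually_at_filter)
  ultimately have "((\<lambda>s. norm ((1 / (s - t)) *\<^sub>R (f s - f t) - f')) \<longlongrightarrow> 0) (at t within S)"
    by (rule Lim_transform_eventually)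
  then show ?thesis
    by (simp add: tendsto_norm_zero_iff LIM_zero_iff)
qed

lemma has_vector_derivative_in_closed_subspace:
  fixes f :: "real \<Rightarrow> 'a::real_normed_vector"
  assumes "(f has_vector_derivative f') (at t within S)" "at t within S \<noteq> bot"
    and "closed V" "subspace V" "\<forall>s\<in>S. f s - f t \<in> V"
  shows "f' \<in> V"
proof (rule Lim_in_closed_set[OF \<open>closed V\<close> _ \<open>at t within S \<noteq> bot\<close>
      has_vector_derivative_difference_quotient[OF assms(1)]])
  show "eventually (\<lambda>s. (1 / (s - t)) *\<^sub>R (f s - f t) \<in> V) (at t within S)"
    using assms(4,5) by (auto simp: eventually_at_filter subspace_scale)
qed

lemma unit_speed_chord_ratio:
  fixes c :: "real \<Rightarrow> 'a::real_normed_vector"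
  assumes "(c has_vector_derivative c') (at t within S)" "norm c' = 1"
  shows "((\<lambda>s. norm (c s - c t) / \<bar>s - t\<bar>) \<longlongrightarrow> 1) (at t within S)"
  using tendsto_norm[OF has_vector_derivative_difference_quotient[OF assms(1)]] assms(2)
  by (simp add: divide_inverse_commute)

lemma strict_antimono_on_interval_swaps_endpoints:
  fixes h :: "real \<Rightarrow> real"
  assumes "a \<le> b" "h ` {a..b} = {a..b}" "strict_antimono_on {a..b} h"
  shows "h a = b" "h b = a"
proof -
  have anti: "h y \<le> h x" if "x \<in> {a..b}" "y \<in> {a..b}" "x \<le> y" for x y
    using monotone_onD[OF assms(3) that(1,2)] that(3) by (cases "x = y") auto
  have ends: "a \<in> {a..b}" "b \<in> {a..b}"
    using assms(1) by auto
  then have "h a \<in> {a..b}" "h b \<in> {a..b}"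
    using assms(2) by blast+
  moreover obtain x y where "x \<in> {a..b}" "h x = b" "y \<in> {a..b}" "h y = a"
    using assms(2) ends by (metis imageE)
  ultimately show "h a = b" "h b = a"
    using anti[of a x] anti[of y b] ends by auto
qed

lemma interval_self_map_reparametrization:
  fixes c :: "real \<Rightarrow> 'a::t2_space"
  assumes c: "continuous_on {a..b} c" "inj_on c {a..b}"
    and U: "continuous_on (c ` {a..b}) U" "inj_on U (c ` {a..b})" "U ` c ` {a..b} = c ` {a..b}"
  obtains h where "h ` {a..b} = {a..b}" "continuous_on {a..b} h" "\<forall>t\<in>{a..b}. c (h t) = U (c t)"
    "strict_mono_on {a..b} h \<or> strict_antimono_on {a..b} h"
proof
  let ?I = "{a..b}"
  define h where "h t = inv_into ?I c (U (c t))" for t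
  have U_in: "U (c t) \<in> c ` ?I" if "t \<in> ?I" for t
    using U(3) that by blast
  show c_h: "\<forall>t\<in>?I. c (h t) = U (c t)"
    using U_in by (simp add: h_def f_inv_into_f)
  have "h ` ?I = inv_into ?I c ` U ` c ` ?I"
    by (auto simp: h_def image_image)
  then show h_onto: "h ` ?I = ?I"
    using U(3) c(2) by (simp add: inv_into_image_cancel)
  have "continuous_on (c ` ?I) (inv_into ?I c)"
    using c by (intro continuous_on_inv) (auto simp: inv_into_f_f)
  then show h_cont: "continuous_on ?I h"
    unfolding h_def using U_in
    by (intro continuous_on_compose2[OF _ continuous_on_compose2[OF U(1) c(1)]]) auto
  have "inj_on h ?I"
    using c_h c(2) U(2) by (smt (verit) imageI inj_on_def)
  then show "strict_mono_on ?I h \<or> strict_antimono_on ?I h"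
    using injective_eq_monotone_map h_cont by (simp add: is_interval_cc)
qed

lemma chord_preserving_homeomorphism_derivative:
  fixes a b :: real and c :: "real \<Rightarrow> 'a::real_normed_vector" and h :: "real \<Rightarrow> real"
  defines "I \<equiv> {a..b}"
  assumes c: "\<forall>t\<in>I. (c has_vector_derivative c' t) (at t within I)" "\<forall>t\<in>I. norm (c' t) = 1"
      "inj_on c I"
    and h: "h ` I = I" "continuous_on I h" "strict_mono_on I h"
    and chords: "\<forall>s\<in>I. \<forall>t\<in>I. norm (c (h s) - c (h t)) = norm (c s - c t)"
    and t: "t \<in> I"
  shows "(h has_field_derivative 1) (at t within I)"
proof -
  have h_less: "h r < h s" if "r \<in> I" "s \<in> I" "r < s" for r s
    using h(3) that by (simp add: strict_mono_onD)
  have "h s \<in> I - {h t}" if "s \<in> I - {t}" for s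
    using h(1) h_less[of s t] h_less[of t s] that t by (cases "s < t") force+
  then have "filterlim h (at (h t) within I) (at t within I)"
    using h(2) t unfolding filterlim_at continuous_on_def
    by (auto simp: eventually_at_filter)
  \<comment> \<open>Both chord ratios tend to 1 and, chords being preserved, their quotient is the
     difference quotient of h.\<close>
  then have image_ratio: "((\<lambda>s. norm (c (h s) - c (h t)) / \<bar>h s - h t\<bar>) \<longlongrightarrow> 1) (at t within I)"
    using filterlim_compose[OF unit_speed_chord_ratio] c h(1) t by blast
  have "((\<lambda>s. norm (c s - c t) / \<bar>s - t\<bar>) \<longlongrightarrow> 1) (at t within I)"
    using unit_speed_chord_ratio c t by blast
  then have "((\<lambda>s. (norm (c s - c t) / \<bar>s - t\<bar>) / (norm (c (h s) - c (h t)) / \<bar>h s - h t\<bar>))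
      \<longlongrightarrow> 1 / 1) (at t within I)"
    using image_ratio by (rule tendsto_divide) simp
  moreover have "(norm (c s - c t) / \<bar>s - t\<bar>) / (norm (c (h s) - c (h t)) / \<bar>h s - h t\<bar>)
      = (h s - h t) / (s - t)" if s: "s \<in> I" "s \<noteq> t" for s
  proof -
    have "norm (c s - c t) \<noteq> 0"
      using c(3) s t by (auto simp: inj_on_def)
    moreover have "\<bar>h s - h t\<bar> / \<bar>s - t\<bar> = (h s - h t) / (s - t)"
      using h_less[of s t] h_less[of t s] s t by (cases "s < t") (auto simp: abs_if divide_simps algebra_simps)
    ultimately show ?thesis
      using chords s t by (simp add: divide_simps)
  qed
  ultimately have "((\<lambda>s. (h s - h t) / (s - t)) \<longlongrightarrow> 1) (at t within I)"
    by (simp add: Lim_transform_eventually eventually_at_filter)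
  then show ?thesis
    by (simp add: has_field_derivative_iff)
qed

lemma chord_preserving_increasing_homeomorphism_eq_id:
  fixes a b :: real and c :: "real \<Rightarrow> 'a::real_normed_vector" and h :: "real \<Rightarrow> real"
  assumes "a \<le> b"
    and c: "\<forall>t\<in>{a..b}. (c has_vector_derivative c' t) (at t within {a..b})"
      "\<forall>t\<in>{a..b}. norm (c' t) = 1" "inj_on c {a..b}"
    and h: "h ` {a..b} = {a..b}" "continuous_on {a..b} h" "strict_mono_on {a..b} h"
    and chords: "\<forall>s\<in>{a..b}. \<forall>t\<in>{a..b}. norm (c (h s) - c (h t)) = norm (c s - c t)"
  shows "\<forall>t\<in>{a..b}. h t = t"
proof -
  have "((\<lambda>s. h s - s) has_field_derivative 0) (at t within {a..b})" if "t \<in> {a..b}" for t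
    using DERIV_diff[OF chord_preserving_homeomorphism_derivative[OF c h chords that] DERIV_ident]
    by simp
  then obtain k where k: "\<forall>t\<in>{a..b}. h t - t = k"
    using has_field_derivative_zero_constant[of "{a..b}" "\<lambda>s. h s - s"] by blast
  have a: "a \<in> {a..b}"
    using \<open>a \<le> b\<close> by simp
  then obtain s where s: "s \<in> {a..b}" "h s = a"
    using h(1) by (metis imageE)
  have "h a \<le> h s"
    using strict_mono_onD[OF h(3) a s(1)] s(1) by (cases "a = s") auto
  moreover have "a \<le> h a"
    using h(1) a by auto
  ultimately have "h a = a"
    using s by simp
  then have "k = 0"
    using k a by fastforce
  then show ?thesis
    using k by simp
qed

lemma unit_speed_arc_symmetry_fixes_or_swaps_ends:
  fixes c :: "real \<Rightarrow> real^3"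
  assumes "a \<le> b"
    and c: "\<forall>t\<in>{a..b}. (c has_vector_derivative c' t) (at t within {a..b})"
      "\<forall>t\<in>{a..b}. norm (c' t) = 1" "inj_on c {a..b}"
    and U: "isometry3 U" "U ` c ` {a..b} = c ` {a..b}"
  shows "(\<forall>x\<in>c ` {a..b}. U x = x) \<or> (U (c a) = c b \<and> U (c b) = c a)"
proof -
  have "continuous_on {a..b} c"
    using c(1) has_vector_derivative_continuous continuous_on_eq_continuous_within by blast
  then obtain h where h: "h ` {a..b} = {a..b}" "continuous_on {a..b} h"
      "\<forall>t\<in>{a..b}. c (h t) = U (c t)" "strict_mono_on {a..b} h \<or> strict_antimono_on {a..b} h"
    by (rule interval_self_map_reparametrization[OF _ c(3) isometry3_continuous_on[OF U(1)]
          inj_on_subset[OF isometry3_inj[OF U(1)] subset_UNIV] U(2)])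
  show ?thesis
    using h(4)
  proof
    assume "strict_mono_on {a..b} h"
    moreover have "\<forall>s\<in>{a..b}. \<forall>t\<in>{a..b}. norm (c (h s) - c (h t)) = norm (c s - c t)"
      using h(3) U(1) by (simp add: isometry3_def dist_norm)
    ultimately have "\<forall>t\<in>{a..b}. h t = t"
      using chord_preserving_increasing_homeomorphism_eq_id[OF \<open>a \<le> b\<close> c h(1,2)] by blast
    then show ?thesis
      using h(3) by auto
  next
    assume "strict_antimono_on {a..b} h"
    then have "h a = b" "h b = a"
      using strict_antimono_on_interval_swaps_endpoints \<open>a \<le> b\<close> h(1) by blast+
    moreover have "U (c a) = c (h a)" "U (c b) = c (h b)"
      using h(3) \<open>a \<le> b\<close> by auto
    ultimately show ?thesis
      by simp
  qed
qed

lemma curved_unit_speed_curve_not_collinear: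
  fixes c :: "real \<Rightarrow> 'a::euclidean_space"
  assumes "a < b"
    and c: "\<forall>t\<in>{a..b}. (c has_vector_derivative c' t) (at t within {a..b})"
      "\<forall>t\<in>{a..b}. (c' has_vector_derivative c'' t) (at t within {a..b})"
      "\<forall>t\<in>{a..b}. norm (c' t) = 1"
    and t0: "t0 \<in> {a..b}" "c'' t0 \<noteq> 0"
  shows "\<not> collinear (c ` {a..b})"
proof
  let ?I = "{a..b}"
  assume "collinear (c ` ?I)"
  then obtain u where "\<forall>x\<in>c ` ?I. \<forall>y\<in>c ` ?I. \<exists>k. x - y = k *\<^sub>R u"
    unfolding collinear_def by blast
  then have u: "\<forall>s\<in>?I. \<forall>t\<in>?I. c s - c t \<in> span {u}"
    by (metis image_eqI span_base singletonI span_mul)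
  have nontrivial: "at t within ?I \<noteq> bot" if "t \<in> ?I" for t
    using \<open>a < b\<close> that by (simp add: trivial_limit_within)
  have c'_span: "c' t \<in> span {u}" if "t \<in> ?I" for t
    using has_vector_derivative_in_closed_subspace[OF _ nontrivial] c(1) u that
    by (meson closed_span subspace_span)
  then have "u \<noteq> 0"
    using c(3) t0(1) by force
  \<comment> \<open>The continuous unit vector c' only takes the values \<plusminus>e, so it is constant.\<close>
  define e where "e = (1 / norm u) *\<^sub>R u"
  have "c' t \<in> {e, - e}" if t: "t \<in> ?I" for t
  proof -
    obtain k where k: "c' t = k *\<^sub>R u"
      using c'_span[OF t] by (auto simp: span_singleton)
    then have "\<bar>k\<bar> * norm u = 1"
      using c(3)[rule_format, OF t] by simp
    then have "\<bar>k\<bar> = 1 / norm u"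
      using \<open>u \<noteq> 0\<close> by (simp add: eq_divide_eq)
    then have "k = 1 / norm u \<or> k = - (1 / norm u)"
      by (cases "k \<ge> 0") auto
    then show ?thesis
      using k by (elim disjE) (simp_all add: e_def)
  qed
  then have "c' ` ?I \<subseteq> {e, - e}"
    by blast
  then have "finite (c' ` ?I)"
    by (rule finite_subset) simp
  moreover have "continuous_on ?I c'"
    using c(2) has_vector_derivative_continuous continuous_on_eq_continuous_within by blast
  then have "connected (c' ` ?I)"
    using connected_continuous_image connected_Icc by blast
  ultimately obtain w where "c' ` ?I = {w}"
    using connected_finite_iff_sing t0(1) by blast
  then have "c' t = w" if "t \<in> ?I" for t
    using that by blast
  then have "c'' t0 \<in> {0}"
    using t0(1) by (intro has_vector_derivative_in_closed_subspace[OF c(2)[rule_format, OF t0(1)]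
          nontrivial[OF t0(1)]]) auto
  with t0(2) show False
    by simp
qed

lemma positive_and_negative_symmetries_if_planar:
  assumes "lies_in_plane C" "nontrivial_symmetry_of C T"
  shows "(\<exists>T. positive_symmetry_of C T) \<and> (\<exists>S. negative_symmetry_of C S)"
proof -
  obtain n d where n: "n \<noteq> 0" and plane: "\<forall>x\<in>C. n \<bullet> x = d"
    using assms(1) unfolding lies_in_plane_def by blast
  let ?R = "plane_reflection n d"
  have R_fixes: "\<forall>x\<in>C. ?R x = x"
    using plane by (simp add: plane_reflection_fixes_plane)
  then have R_image: "?R ` C = C"
    by force
  have iso_R: "isometry3 ?R"
    using n by (rule isometry3_plane_reflection)
  have det_R: "det (matrix (linear_part ?R)) = -1"
    using det_plane_reflection[OF n] by (simp add: linear_part_plane_reflection)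
  then have "?R \<noteq> id"
    using det_linear_part_id by auto
  then have "negative_symmetry_of C ?R"
    using iso_R R_image det_R
    by (simp add: negative_symmetry_of_def symmetry_of_def orientation_reversing_def)
  moreover have "\<exists>T'. positive_symmetry_of C T'"
  proof (cases "orientation_preserving T")
    case True
    then show ?thesis
      using assms(2) by (auto simp: positive_symmetry_of_def nontrivial_symmetry_of_def)
  next
    case False
    obtain x where iso_T: "isometry3 T" and T_image: "T ` C = C" and x: "x \<in> C" "T x \<noteq> x"
      using assms(2) by (auto simp: nontrivial_symmetry_of_def symmetry_of_def)
    then have "det (matrix (linear_part T)) = -1"
      using False det_linear_part_cases[OF iso_T] by (auto simp: orientation_preserving_def)
    then have "det (matrix (linear_part (T \<circ> ?R))) = 1"
      using det_linear_part_comp[OF iso_T iso_R] det_R by simp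
    moreover have "(T \<circ> ?R) ` C = C"
      using T_image R_image by (metis image_comp)
    moreover have "T \<circ> ?R \<noteq> id"
      using x R_fixes by (metis comp_apply id_apply)
    ultimately have "positive_symmetry_of C (T \<circ> ?R)"
      using isometry3_comp[OF iso_T iso_R]
      by (simp add: positive_symmetry_of_def symmetry_of_def orientation_preserving_def)
    then show ?thesis
      by blast
  qed
  ultimately show ?thesis
    by blast
qed

lemma planar_and_nontrivial_if_positive_and_negative_symmetries:
  assumes "\<not> collinear C" "p \<noteq> q"
    and fixes_or_swaps: "\<And>U. isometry3 U \<Longrightarrow> U ` C = C \<Longrightarrow> (\<forall>x\<in>C. U x = x) \<or> (U p = q \<and> U q = p)"
    and positive: "positive_symmetry_of C T" and negative: "negative_symmetry_of C S"
  shows "lies_in_plane C \<and> nontrivial_symmetry_of C T"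
proof -
  have T: "isometry3 T" "T \<noteq> id" "T ` C = C" "orientation_preserving T"
    using positive by (auto simp: positive_symmetry_of_def symmetry_of_def)
  have S: "isometry3 S" "S \<noteq> id" "S ` C = C" "orientation_reversing S"
    using negative by (auto simp: negative_symmetry_of_def symmetry_of_def)
  have T_moves: "\<not> (\<forall>x\<in>C. T x = x)"
    using orientation_preserving_pointwise_fixed_set_collinear T assms(1) by blast
  then have "nontrivial_symmetry_of C T"
    using positive by (auto simp: nontrivial_symmetry_of_def positive_symmetry_of_def)
  have T_swaps: "T p = q \<and> T q = p"
    using fixes_or_swaps T T_moves by blast
  have "lies_in_plane C"
  proof (cases "\<forall>x\<in>C. S x = x")
    case True
    then show ?thesis
      using pointwise_fixed_set_lies_in_plane S by blast
  next
    case False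
    then have "S p = q"
      using fixes_or_swaps S by blast
    then have "(T \<circ> S) p \<noteq> q"
      using T_swaps \<open>p \<noteq> q\<close> by simp
    moreover have TS: "isometry3 (T \<circ> S)"
      using isometry3_comp T S by blast
    moreover have "(T \<circ> S) ` C = C"
      using T(3) S(3) by (metis image_comp)
    ultimately have "\<forall>x\<in>C. (T \<circ> S) x = x"
      using fixes_or_swaps by blast
    moreover have "det (matrix (linear_part (T \<circ> S))) < 0"
      using det_linear_part_comp[OF T(1) S(1)] T(4) S(4)
      by (simp add: orientation_preserving_def orientation_reversing_def mult_pos_neg)
    then have "T \<circ> S \<noteq> id"
      using det_linear_part_id by auto
    ultimately show ?thesis
      using pointwise_fixed_set_lies_in_plane TS by blast
  qed
  then show ?thesis
    using \<open>nontrivial_symmetry_of C T\<close> ..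
qed

theorem propositionA2:
  fixes l :: real and c :: "real \<Rightarrow> real^3"
  assumes "l > 0"
    and "arclength_arc_nonzero_curvature l c"
  shows "((\<exists>T. positive_symmetry_of (c ` {-l/2..l/2}) T) \<and>
          (\<exists>S. negative_symmetry_of (c ` {-l/2..l/2}) S))
     \<longleftrightarrow> (lies_in_plane (c ` {-l/2..l/2}) \<and>
          (\<exists>T. nontrivial_symmetry_of (c ` {-l/2..l/2}) T))"
proof -
  obtain c' c'' where inj: "inj_on c {-l/2..l/2}"
    and c': "\<forall>t\<in>{-l/2..l/2}. (c has_vector_derivative c' t) (at t within {-l/2..l/2})"
    and c'': "\<forall>t\<in>{-l/2..l/2}. (c' has_vector_derivative c'' t) (at t within {-l/2..l/2})"
    and unit_speed: "\<forall>t\<in>{-l/2..l/2}. norm (c' t) = 1"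
    and curved: "\<forall>t\<in>{-l/2..l/2}. c'' t \<noteq> 0"
    using assms(2) unfolding arclength_arc_nonzero_curvature_def Let_def by auto
  have ends: "-l/2 < l/2" "(0::real) \<in> {-l/2..l/2}"
    using assms(1) by auto
  have "\<not> collinear (c ` {-l/2..l/2})"
    using curved_unit_speed_curve_not_collinear[OF ends(1) c' c'' unit_speed ends(2)] curved ends(2)
    by blast
  moreover have "c (-l/2) \<noteq> c (l/2)"
    using inj ends(1) by (auto dest: inj_onD)
  moreover note unit_speed_arc_symmetry_fixes_or_swaps_ends[OF less_imp_le[OF ends(1)] c' unit_speed inj]
  ultimately show ?thesis
    using planar_and_nontrivial_if_positive_and_negative_symmetries positive_and_negative_symmetries_if_planar
    by metis
qed

end
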